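(* Let $n\ge 5$ and let $\sigma$ be a maximal simplex of $\Delta_n$ that covers all places. If $|N(w)\cap\sigma|\ge 2$ for all $w\in\sigma$, then there exist $v,w\in\sigma$ with $v$ adjacent to $w$ in $\mathbb{I}_n$ and $\sigma=N(v)\cup N(w)$.
   Context: $\mathbb{I}_n$ is the $n$-dimensional hypercube graph on vertex set $\{0,1\}^n$ (adjacent iff differing in exactly one coordinate), with Hamming distance $d(v,w)=\#\{i: v(i)\ne w(i)\}$, $v(i)$ the $i$-th coordinate. $\Delta_n=\mathcal{VR}(\mathbb{I}_n;3)$ is the simplicial complex whose simplices are the subsets $\sigma\subseteq\{0,1\}^n$ with $d(x,y)\le 3$ for all $x,y\in\sigma$. A simplex $\sigma$ covers all places if for each $i\in[n]=\{1,\dots,n\}$ there are $v,w\in\sigma$ with $v(i)=1$ and $w(i)=0$. $N(v)$ denotes the set of the $n$ vertices adjacent to $v$ in $\mathbb{I}_n$. *)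

theory Defs
  imports Main
begin

text \<open>A vertex of the n-cube {0,1}^n is encoded as a function
  v :: nat => bool with v i = False for i outside {1..n}; v i = True means
  the i-th coordinate is 1.\<close>

definition cube_vertices :: "nat \<Rightarrow> (nat \<Rightarrow> bool) set" where
  "cube_vertices n = {v. \<forall>i. i \<notin> {1..n} \<longrightarrow> \<not> v i}"

definition hdist :: "nat \<Rightarrow> (nat \<Rightarrow> bool) \<Rightarrow> (nat \<Rightarrow> bool) \<Rightarrow> nat" where
  "hdist n v w = card {i \<in> {1..n}. v i \<noteq> w i}"

definition cube_adj :: "nat \<Rightarrow> (nat \<Rightarrow> bool) \<Rightarrow> (nat \<Rightarrow> bool) \<Rightarrow> bool" where
  "cube_adj n v w \<longleftrightarrow> v \<in> cube_vertices n \<and> w \<in> cube_vertices n \<and> hdist n v w = 1"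

definition nbhd :: "nat \<Rightarrow> (nat \<Rightarrow> bool) \<Rightarrow> (nat \<Rightarrow> bool) set" where
  "nbhd n v = {w. cube_adj n v w}"

text \<open>Simplices of VR(I_n;3): nonempty subsets of the vertex set with pairwise
  distance at most 3.\<close>
definition is_simplex :: "nat \<Rightarrow> (nat \<Rightarrow> bool) set \<Rightarrow> bool" where
  "is_simplex n \<sigma> \<longleftrightarrow> \<sigma> \<noteq> {} \<and> \<sigma> \<subseteq> cube_vertices n \<and>
     (\<forall>x\<in>\<sigma>. \<forall>y\<in>\<sigma>. hdist n x y \<le> 3)"

definition maximal_simplex :: "nat \<Rightarrow> (nat \<Rightarrow> bool) set \<Rightarrow> bool" where
  "maximal_simplex n \<sigma> \<longleftrightarrow> is_simplex n \<sigma> \<and>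
     (\<forall>\<tau>. is_simplex n \<tau> \<and> \<sigma> \<subseteq> \<tau> \<longrightarrow> \<tau> = \<sigma>)"

definition covers_all_places :: "nat \<Rightarrow> (nat \<Rightarrow> bool) set \<Rightarrow> bool" where
  "covers_all_places n \<sigma> \<longleftrightarrow>
     (\<forall>i\<in>{1..n}. \<exists>v\<in>\<sigma>. \<exists>w\<in>\<sigma>. v i \<and> \<not> w i)"

end

theory Submission
  imports Defs
begin

text \<open>Identify each vertex with its support, so that Hamming distance becomes the size of a
  symmetric difference. Inside the simplex, supports of equal parity are at distance exactly 2,
  and every edge joins the two parity classes. Translating by one member turns a family at
  pairwise distance 2 into a family of pairwise intersecting 2-sets, which is either a star or
  lies inside a triangle. In the first case all members of the class are adjacent to a common
  centre; the second case would confine the whole simplex to three coordinates (every vertex has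
  two neighbours in the other class), contradicting that it covers all n \<ge> 4 places. The
  centres U and W of the two classes are at odd distance at most 3, and distance 3 would again
  confine the simplex to the three places where U and W differ. So U and W are adjacent, the
  simplex lies in N(U) \<union> N(W), which is itself a simplex, and maximality gives equality.\<close>

lemma card_sym_diff_add_card_Int:
  assumes "finite A" "finite B"
  shows "card (sym_diff A B) + 2 * card (A \<inter> B) = card A + card B"
proof -
  have "card (sym_diff A B) = card (A - B) + card (B - A)"
    using assms by (subst card_Un_disjoint) auto
  moreover have "card A = card (A - B) + card (A \<inter> B)" "card B = card (B - A) + card (A \<inter> B)"
    using assms card_Int_Diff[of A B] card_Int_Diff[of B A] by (simp_all add: Int_commute)
  ultimately show ?thesis by simp
qed

lemma even_card_sym_diff_iff:
  assumes "finite A" "finite B"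
  shows "even (card (sym_diff A B)) \<longleftrightarrow> (even (card A) \<longleftrightarrow> even (card B))"
  using card_sym_diff_add_card_Int[OF assms] by presburger

lemma even_card_if_card_sym_diff_eq_1:
  assumes "finite A" "finite B" "card (sym_diff A B) = 1"
  shows "even (card B) \<longleftrightarrow> odd (card A)"
  using even_card_sym_diff_iff[OF assms(1,2)] assms(3) by auto

lemma sym_diff_commute: "sym_diff A B = sym_diff B A"
  by blast

lemma card_sym_diff_triangle:
  assumes "finite A" "finite B" "finite C"
  shows "card (sym_diff A C) \<le> card (sym_diff A B) + card (sym_diff B C)"
proof -
  have "card (sym_diff A C) \<le> card (sym_diff A B \<union> sym_diff B C)"
    using assms by (intro card_mono) auto
  also have "\<dots> \<le> card (sym_diff A B) + card (sym_diff B C)"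
    by (rule card_Un_le)
  finally show ?thesis .
qed

lemma sym_diff_subset_if_card_eq_add:
  assumes "finite A" "finite B" "finite C"
    and "card (sym_diff A C) = card (sym_diff A B) + card (sym_diff B C)"
  shows "sym_diff A B \<subseteq> sym_diff A C"
proof -
  have "sym_diff A C = sym_diff (sym_diff A B) (sym_diff B C)" by blast
  with assms have "card (sym_diff A B \<inter> sym_diff B C) = 0"
    using card_sym_diff_add_card_Int[of "sym_diff A B" "sym_diff B C"] by simp
  with assms have "sym_diff A B \<inter> sym_diff B C = {}" by simp
  then show ?thesis by blast
qed

lemma sym_diff_subset_if_two_neighbours:
  assumes "sym_diff S1 A \<subseteq> K" "sym_diff S2 A \<subseteq> K" "S1 \<noteq> S2"
    and "card (sym_diff B S1) = 1" "card (sym_diff B S2) = 1"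
  shows "sym_diff B A \<subseteq> K"
proof -
  obtain x where x: "sym_diff B S1 = {x}" using assms(4) card_1_singletonE by blast
  obtain y where y: "sym_diff B S2 = {y}" using assms(5) card_1_singletonE by blast
  have "sym_diff S1 S2 = sym_diff {x} {y}" using x y by blast
  moreover have "sym_diff S1 S2 \<subseteq> K" using assms(1,2) by blast
  moreover have "x \<noteq> y" using x y assms(3) by blast
  ultimately have "x \<in> K" by blast
  moreover have "sym_diff B A = sym_diff {x} (sym_diff S1 A)" using x by blast
  ultimately show ?thesis using assms(1) by auto
qed

lemma pairwise_meeting_doubletons_star_or_triangle:
  assumes doubletons: "\<And>T. T \<in> E \<Longrightarrow> card T = 2"
    and meet: "\<And>S T. S \<in> E \<Longrightarrow> T \<in> E \<Longrightarrow> S \<inter> T \<noteq> {}"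
  shows "(\<exists>c. \<forall>T\<in>E. c \<in> T) \<or> (\<exists>K. finite K \<and> card K \<le> 3 \<and> \<Union>E \<subseteq> K)"
proof (cases "\<exists>c. \<forall>T\<in>E. c \<in> T")
  case no_centre: False
  have other: "\<exists>y. T = {x, y} \<and> y \<noteq> x" if "T \<in> E" "x \<in> T" for T x
    using doubletons[OF that(1)] that(2) by (metis card_2_iff insertE insert_commute singletonD)
  obtain S where "S \<in> E" using no_centre by blast
  then obtain a b where ab: "{a, b} \<in> E" "a \<noteq> b"
    using doubletons by (metis card_2_iff)
  obtain T2 where T2: "T2 \<in> E" "a \<notin> T2" using no_centre by blast
  obtain T3 where T3: "T3 \<in> E" "b \<notin> T3" using no_centre by blast
  have "b \<in> T2" "a \<in> T3" using meet[OF ab(1) T2(1)] meet[OF ab(1) T3(1)] T2 T3 by blast+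
  then obtain c d where cd: "T2 = {b, c}" "c \<noteq> b" "T3 = {a, d}" "d \<noteq> a"
    using other[OF T2(1)] other[OF T3(1)] by meson
  have "c = d" using meet[OF T2(1) T3(1)] cd T2(2) T3(2) by auto
  have "\<Union>E \<subseteq> {a, b, c}"
  proof
    fix z assume "z \<in> \<Union>E"
    then obtain T where T: "T \<in> E" "z \<in> T" by blast
    then obtain w where w: "T = {z, w}" using other by blast
    have "{b, c} \<in> E" "{a, c} \<in> E" using T2 T3 cd \<open>c = d\<close> by auto
    note meets = meet[OF T(1) ab(1)] meet[OF T(1) this(1)] meet[OF T(1) this(2)]
    show "z \<in> {a, b, c}"
    proof (rule ccontr)
      assume "z \<notin> {a, b, c}"
      then have "w \<in> {a, b}" "w \<in> {b, c}" "w \<in> {a, c}" using meets unfolding w by auto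
      then show False using ab(2) cd(2,4) \<open>c = d\<close> by auto
    qed
  qed
  then show ?thesis by (intro disjI2 exI[of _ "{a, b, c}"]) (simp add: card_insert_if)
qed simp

lemma sym_diff_distance_two_star_or_triangle:
  assumes distance_two: "\<And>A B. A \<in> C \<Longrightarrow> B \<in> C \<Longrightarrow> A \<noteq> B \<Longrightarrow> card (sym_diff A B) = 2"
    and "A0 \<in> C" "A1 \<in> C" "A0 \<noteq> A1"
  shows "(\<exists>U \<subseteq> \<Union>C. \<forall>A\<in>C. card (sym_diff A U) = 1) \<or>
    (\<exists>K. finite K \<and> card K \<le> 3 \<and> (\<forall>A\<in>C. sym_diff A A0 \<subseteq> K))"
proof -
  define E where "E = sym_diff A0 ` (C - {A0})"
  have doubletons: "card T = 2" if "T \<in> E" for T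
    using that distance_two \<open>A0 \<in> C\<close> unfolding E_def by auto
  have "S \<inter> T \<noteq> {}" if "S \<in> E" "T \<in> E" for S T
  proof (cases "S = T")
    case True
    then show ?thesis using doubletons[OF that(1)] by auto
  next
    case False
    from that obtain A B where "A \<in> C" "B \<in> C" "S = sym_diff A0 A" "T = sym_diff A0 B"
      unfolding E_def by blast
    moreover from this have "sym_diff S T = sym_diff A B" by blast
    ultimately have "card (sym_diff S T) = 2" using False distance_two[of A B] by auto
    moreover have "finite S" "finite T" "card S = 2" "card T = 2"
      using doubletons that by (simp_all add: card_ge_0_finite)
    ultimately have "card (S \<inter> T) = 1" using card_sym_diff_add_card_Int[of S T] by simp
    then show ?thesis by force
  qed
  with doubletons pairwise_meeting_doubletons_star_or_triangle[of E]
  consider (star) c where "\<forall>T\<in>E. c \<in> T" | (triangle) K where "finite K" "card K \<le> 3" "\<Union>E \<subseteq> K"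
    by blast
  then show ?thesis
  proof cases
    case (star c)
    have "card (sym_diff A (sym_diff A0 {c})) = 1" if "A \<in> C" for A
    proof (cases "A = A0")
      case False
      with that have "sym_diff A0 A \<in> E" unfolding E_def by blast
      with star have "c \<in> sym_diff A0 A" by (rule bspec)
      moreover have "sym_diff A (sym_diff A0 {c}) = sym_diff A0 A - {c}" using calculation by blast
      ultimately show ?thesis using doubletons \<open>sym_diff A0 A \<in> E\<close> by simp
    next
      case True
      moreover have "sym_diff A0 (sym_diff A0 {c}) = {c}" by blast
      ultimately show ?thesis by simp
    qed
    moreover have "sym_diff A0 A1 \<in> E"
      using \<open>A1 \<in> C\<close> \<open>A0 \<noteq> A1\<close> unfolding E_def by blast
    with star have "c \<in> sym_diff A0 A1" by (rule bspec)
    then have "sym_diff A0 {c} \<subseteq> \<Union>C" using \<open>A0 \<in> C\<close> \<open>A1 \<in> C\<close> by blast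
    ultimately show ?thesis by blast
  next
    case (triangle K)
    then have "sym_diff A A0 \<subseteq> K" if "A \<in> C" for A
      using that unfolding E_def by (cases "A = A0") auto
    with triangle show ?thesis by blast
  qed
qed

locale cube_family =
  fixes n :: nat and F :: "nat set set"
  assumes subset_places: "A \<in> F \<Longrightarrow> A \<subseteq> {1..n}"
    and distance_le_3: "A \<in> F \<Longrightarrow> B \<in> F \<Longrightarrow> card (sym_diff A B) \<le> 3"
    and two_neighbours: "A \<in> F \<Longrightarrow>
      \<exists>B1\<in>F. \<exists>B2\<in>F. B1 \<noteq> B2 \<and> card (sym_diff A B1) = 1 \<and> card (sym_diff A B2) = 1"
    and covers_places: "i \<in> {1..n} \<Longrightarrow> \<exists>A\<in>F. \<exists>B\<in>F. i \<in> A \<and> i \<notin> B"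
    and four_le_n: "4 \<le> n"
begin

lemma finite_member: "A \<in> F \<Longrightarrow> finite A"
  using subset_places finite_subset by blast

lemma not_confined:
  assumes "finite K" "card K \<le> 3" and confined: "\<And>X. X \<in> F \<Longrightarrow> sym_diff X A0 \<subseteq> K"
  shows False
proof -
  have "\<not> {1..n} \<subseteq> K"
    using card_mono[OF \<open>finite K\<close>, of "{1..n}"] \<open>card K \<le> 3\<close> four_le_n by auto
  then obtain i where "i \<in> {1..n}" "i \<notin> K" by blast
  then obtain A B where "A \<in> F" "B \<in> F" "i \<in> A" "i \<notin> B" using covers_places by blast
  moreover have "i \<notin> sym_diff A A0" "i \<notin> sym_diff B A0"
    using confined[OF \<open>A \<in> F\<close>] confined[OF \<open>B \<in> F\<close>] \<open>i \<notin> K\<close> by auto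
  ultimately show False by blast
qed

definition parity_class :: "bool \<Rightarrow> nat set set" where
  "parity_class b = {A \<in> F. even (card A) = b}"

lemma neighbour_in_other_parity_class:
  assumes "A \<in> parity_class b" "B \<in> F" "card (sym_diff A B) = 1"
  shows "B \<in> parity_class (\<not> b)"
  using assms even_card_if_card_sym_diff_eq_1[of A B] finite_member
  unfolding parity_class_def by auto

lemma distance_two_in_parity_class:
  assumes "A \<in> parity_class b" "B \<in> parity_class b" "A \<noteq> B"
  shows "card (sym_diff A B) = 2"
proof -
  have "finite A" "finite B" "A \<in> F" "B \<in> F"
    using assms finite_member unfolding parity_class_def by auto
  then have "even (card (sym_diff A B))" "card (sym_diff A B) \<le> 3" "card (sym_diff A B) \<noteq> 0"
    using assms even_card_sym_diff_iff[of A B] distance_le_3 unfolding parity_class_def by auto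
  then show ?thesis by presburger
qed

lemma two_neighbours_in_other_parity_class:
  assumes "A \<in> parity_class (\<not> b)"
  obtains B1 B2 where "B1 \<in> parity_class b" "B2 \<in> parity_class b" "B1 \<noteq> B2"
    "card (sym_diff A B1) = 1" "card (sym_diff A B2) = 1"
  using assms two_neighbours[of A] neighbour_in_other_parity_class[OF assms]
  unfolding parity_class_def by auto

lemma parity_class_nonempty: "parity_class b \<noteq> {}"
proof -
  obtain A where "A \<in> F" using covers_places[of 1] four_le_n by auto
  then have "A \<in> parity_class (\<not> odd (card A))" unfolding parity_class_def by simp
  then obtain B where "B \<in> parity_class (odd (card A))"
    by (rule two_neighbours_in_other_parity_class)
  with \<open>A \<in> parity_class (\<not> odd (card A))\<close> show ?thesis
    by (cases b; cases "even (card A)") auto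
qed

lemma parity_class_not_confined:
  assumes "finite K" "card K \<le> 3" and confined: "\<forall>A\<in>parity_class b. sym_diff A A0 \<subseteq> K"
  shows False
proof -
  have "sym_diff X A0 \<subseteq> K" if "X \<in> F" for X
  proof (cases "X \<in> parity_class b")
    case False
    with \<open>X \<in> F\<close> have "X \<in> parity_class (\<not> b)" unfolding parity_class_def by auto
    then obtain Y1 Y2 where "Y1 \<in> parity_class b" "Y2 \<in> parity_class b" "Y1 \<noteq> Y2"
      "card (sym_diff X Y1) = 1" "card (sym_diff X Y2) = 1"
      by (rule two_neighbours_in_other_parity_class)
    then show ?thesis
      by (rule sym_diff_subset_if_two_neighbours[OF bspec[OF confined] bspec[OF confined]])
  qed (use confined in simp)
  with assms(1,2) show False by (rule not_confined)
qed

lemma parity_class_centre: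
  obtains U where "U \<subseteq> {1..n}" "\<And>A. A \<in> parity_class b \<Longrightarrow> card (sym_diff A U) = 1"
proof -
  let ?C = "parity_class b"
  obtain B0 where "B0 \<in> parity_class (\<not> b)" using parity_class_nonempty by blast
  then obtain B1 B2 where B12: "B1 \<in> ?C" "B2 \<in> ?C" "B1 \<noteq> B2"
    by (rule two_neighbours_in_other_parity_class)
  have "(\<exists>U \<subseteq> \<Union>?C. \<forall>A\<in>?C. card (sym_diff A U) = 1) \<or>
    (\<exists>K. finite K \<and> card K \<le> 3 \<and> (\<forall>A\<in>?C. sym_diff A B1 \<subseteq> K))"
    using sym_diff_distance_two_star_or_triangle[OF distance_two_in_parity_class B12] by simp
  moreover have "\<Union>?C \<subseteq> {1..n}" using subset_places unfolding parity_class_def by auto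
  ultimately show ?thesis
    using parity_class_not_confined that by (meson subset_trans)
qed

lemma distance_to_other_centre:
  assumes "Z \<in> parity_class b" "finite V"
    and centre: "\<And>A. A \<in> parity_class (\<not> b) \<Longrightarrow> card (sym_diff A V) = 1"
  shows "card (sym_diff Z V) \<le> 2"
proof -
  obtain Z' where "Z' \<in> F" "card (sym_diff Z Z') = 1"
    using assms(1) two_neighbours unfolding parity_class_def by blast
  moreover from this have "Z' \<in> parity_class (\<not> b)"
    using neighbour_in_other_parity_class[OF assms(1)] by blast
  moreover have "finite Z" using assms(1) finite_member unfolding parity_class_def by blast
  ultimately show ?thesis
    using card_sym_diff_triangle[of Z Z' V] finite_member \<open>finite V\<close> centre by fastforce
qed

lemma centres_adjacent:
  assumes "finite U" "finite W"
    and U: "\<And>A. A \<in> parity_class True \<Longrightarrow> card (sym_diff A U) = 1"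
    and W: "\<And>A. A \<in> parity_class False \<Longrightarrow> card (sym_diff A W) = 1"
  shows "card (sym_diff U W) = 1"
proof -
  have distances: "card (sym_diff Z U) + card (sym_diff Z W) \<le> 3" if "Z \<in> F" for Z
  proof (cases "even (card Z)")
    case True
    then have "Z \<in> parity_class True" using that unfolding parity_class_def by simp
    then show ?thesis using U distance_to_other_centre[OF _ \<open>finite W\<close>] W by fastforce
  next
    case False
    then have "Z \<in> parity_class False" using that unfolding parity_class_def by simp
    then show ?thesis using W distance_to_other_centre[OF _ \<open>finite U\<close>] U by fastforce
  qed
  have triangle: "card (sym_diff U W) \<le> card (sym_diff Z U) + card (sym_diff Z W)" if "Z \<in> F" for Z
    using card_sym_diff_triangle[OF \<open>finite U\<close> finite_member[OF that] \<open>finite W\<close>]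
    by (simp add: sym_diff_commute)
  obtain X Y where "X \<in> parity_class True" "Y \<in> parity_class False"
    using parity_class_nonempty by blast
  then have "X \<in> F" "even (card X)" "Y \<in> F" "odd (card Y)"
    "card (sym_diff X U) = 1" "card (sym_diff Y W) = 1"
    using U W unfolding parity_class_def by auto
  then have "odd (card U)" "even (card W)"
    using even_card_if_card_sym_diff_eq_1 finite_member \<open>finite U\<close> \<open>finite W\<close> by blast+
  then have "odd (card (sym_diff U W))"
    using even_card_sym_diff_iff[OF \<open>finite U\<close> \<open>finite W\<close>] by simp
  moreover have "card (sym_diff U W) \<le> 3"
    using triangle[OF \<open>X \<in> F\<close>] distances[OF \<open>X \<in> F\<close>] by linarith
  moreover have "odd k \<Longrightarrow> k \<le> 3 \<Longrightarrow> k = 1 \<or> k = 3" for k :: nat by presburger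
  ultimately consider "card (sym_diff U W) = 1" | (apart) "card (sym_diff U W) = 3"
    by blast
  then show ?thesis
  proof cases
    case apart
    have "finite (sym_diff U W)" "card (sym_diff U W) \<le> 3"
      using \<open>finite U\<close> \<open>finite W\<close> apart by simp_all
    moreover have "sym_diff Z U \<subseteq> sym_diff U W" if "Z \<in> F" for Z
      using sym_diff_subset_if_card_eq_add[OF \<open>finite U\<close> finite_member[OF that] \<open>finite W\<close>]
        triangle[OF that] distances[OF that] apart by (simp add: sym_diff_commute)
    ultimately show ?thesis by (rule not_confined[THEN FalseE])
  qed
qed

lemma adjacent_centres:
  obtains U W where "U \<subseteq> {1..n}" "W \<subseteq> {1..n}" "card (sym_diff U W) = 1"
    "\<And>A. A \<in> F \<Longrightarrow> card (sym_diff A U) = 1 \<or> card (sym_diff A W) = 1"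
proof -
  obtain U where U: "U \<subseteq> {1..n}" "\<And>A. A \<in> parity_class True \<Longrightarrow> card (sym_diff A U) = 1"
    using parity_class_centre by metis
  obtain W where W: "W \<subseteq> {1..n}" "\<And>A. A \<in> parity_class False \<Longrightarrow> card (sym_diff A W) = 1"
    using parity_class_centre by metis
  have "finite U" "finite W" using U(1) W(1) finite_subset by auto
  have "card (sym_diff A U) = 1 \<or> card (sym_diff A W) = 1" if "A \<in> F" for A
    using U(2) W(2) that unfolding parity_class_def by (cases "even (card A)") auto
  with U(1) W(1) centres_adjacent[OF \<open>finite U\<close> \<open>finite W\<close> U(2) W(2)] show ?thesis
    by (rule that)
qed

end

lemma hdist_eq_card_sym_diff:
  assumes "v \<in> cube_vertices n" "w \<in> cube_vertices n"
  shows "hdist n v w = card (sym_diff (Collect v) (Collect w))"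
proof -
  have "{i \<in> {1..n}. v i \<noteq> w i} = sym_diff (Collect v) (Collect w)"
    using assms unfolding cube_vertices_def by auto
  then show ?thesis unfolding hdist_def by simp
qed

lemma hdist_commute: "hdist n v w = hdist n w v"
  unfolding hdist_def by (metis (full_types))

lemma hdist_triangle: "hdist n u w \<le> hdist n u v + hdist n v w"
proof -
  have "hdist n u w \<le> card ({i \<in> {1..n}. u i \<noteq> v i} \<union> {i \<in> {1..n}. v i \<noteq> w i})"
    unfolding hdist_def by (intro card_mono) auto
  also have "\<dots> \<le> hdist n u v + hdist n v w"
    unfolding hdist_def by (rule card_Un_le)
  finally show ?thesis .
qed

lemma is_simplex_nbhd_Un:
  assumes "cube_adj n u w"
  shows "is_simplex n (nbhd n u \<union> nbhd n w)"
proof -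
  have "hdist n u w = 1" using assms unfolding cube_adj_def by simp
  have near: "hdist n x u + hdist n x w \<le> 3" if "x \<in> nbhd n u \<union> nbhd n w" for x
    using that hdist_triangle[of n x u w] hdist_triangle[of n x w u] \<open>hdist n u w = 1\<close>
    unfolding nbhd_def cube_adj_def by (auto simp: hdist_commute)
  have "hdist n x y \<le> 3" if "x \<in> nbhd n u \<union> nbhd n w" "y \<in> nbhd n u \<union> nbhd n w" for x y
    using near[OF that(1)] near[OF that(2)] hdist_triangle[of n x y u] hdist_triangle[of n x y w]
      hdist_commute[of n y u] hdist_commute[of n y w]
    by linarith
  moreover have "w \<in> nbhd n u" using assms unfolding nbhd_def by simp
  ultimately show ?thesis unfolding is_simplex_def nbhd_def cube_adj_def by blast
qed

lemma cube_family_supports: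
  assumes "4 \<le> n" "is_simplex n \<sigma>" "covers_all_places n \<sigma>"
    and degree: "\<forall>w\<in>\<sigma>. card (nbhd n w \<inter> \<sigma>) \<ge> 2"
  shows "cube_family n (Collect ` \<sigma>)"
proof
  have vertices: "\<sigma> \<subseteq> cube_vertices n" using assms(2) unfolding is_simplex_def by simp
  show "A \<subseteq> {1..n}" if "A \<in> Collect ` \<sigma>" for A
    using that vertices unfolding cube_vertices_def by blast
  show "card (sym_diff A B) \<le> 3" if AB: "A \<in> Collect ` \<sigma>" "B \<in> Collect ` \<sigma>" for A B
  proof -
    obtain x y where "x \<in> \<sigma>" "y \<in> \<sigma>" "A = Collect x" "B = Collect y" using AB by blast
    moreover have "hdist n x y \<le> 3" using assms(2) \<open>x \<in> \<sigma>\<close> \<open>y \<in> \<sigma>\<close>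
      unfolding is_simplex_def by blast
    moreover have "x \<in> cube_vertices n" "y \<in> cube_vertices n"
      using vertices \<open>x \<in> \<sigma>\<close> \<open>y \<in> \<sigma>\<close> by blast+
    ultimately show ?thesis using hdist_eq_card_sym_diff by simp
  qed
  show "\<exists>B1\<in>Collect ` \<sigma>. \<exists>B2\<in>Collect ` \<sigma>. B1 \<noteq> B2 \<and>
      card (sym_diff A B1) = 1 \<and> card (sym_diff A B2) = 1"
    if A: "A \<in> Collect ` \<sigma>" for A
  proof -
    obtain v where "v \<in> \<sigma>" "A = Collect v" using A by blast
    with degree obtain y1 y2 where y: "y1 \<in> nbhd n v \<inter> \<sigma>" "y2 \<in> nbhd n v \<inter> \<sigma>" "y1 \<noteq> y2"
      by (metis card_le_Suc_iff numeral_2_eq_2 insert_iff)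
    then have "card (sym_diff A (Collect y1)) = 1" "card (sym_diff A (Collect y2)) = 1"
      using hdist_eq_card_sym_diff \<open>A = Collect v\<close> unfolding nbhd_def cube_adj_def by auto
    moreover have "Collect y1 \<noteq> Collect y2" using y(3) by (auto dest: Collect_inj)
    moreover have "Collect y1 \<in> Collect ` \<sigma>" "Collect y2 \<in> Collect ` \<sigma>" using y by auto
    ultimately show ?thesis by (intro bexI[of _ "Collect y1"] bexI[of _ "Collect y2"] conjI)
  qed
  show "\<exists>A\<in>Collect ` \<sigma>. \<exists>B\<in>Collect ` \<sigma>. i \<in> A \<and> i \<notin> B" if i: "i \<in> {1..n}" for i
  proof -
    obtain v w where "v \<in> \<sigma>" "w \<in> \<sigma>" "v i" "\<not> w i"
      using assms(3) i unfolding covers_all_places_def by blast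
    then show ?thesis by (intro bexI[of _ "Collect v"] bexI[of _ "Collect w"]) auto
  qed
qed (fact assms(1))

lemma simplex_in_adjacent_neighbourhoods:
  assumes "4 \<le> n" "is_simplex n \<sigma>" "covers_all_places n \<sigma>"
    and "\<forall>w\<in>\<sigma>. card (nbhd n w \<inter> \<sigma>) \<ge> 2"
  obtains u w where "cube_adj n u w" "\<sigma> \<subseteq> nbhd n u \<union> nbhd n w"
proof -
  interpret cube_family n "Collect ` \<sigma>"
    using cube_family_supports assms by simp
  obtain U W where "U \<subseteq> {1..n}" "W \<subseteq> {1..n}" "card (sym_diff U W) = 1"
    and near: "\<And>A. A \<in> Collect ` \<sigma> \<Longrightarrow> card (sym_diff A U) = 1 \<or> card (sym_diff A W) = 1"
    using adjacent_centres by metis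
  define u w where "u i \<longleftrightarrow> i \<in> U" and "w i \<longleftrightarrow> i \<in> W" for i
  have vertices: "u \<in> cube_vertices n" "w \<in> cube_vertices n" "Collect u = U" "Collect w = W"
    using \<open>U \<subseteq> {1..n}\<close> \<open>W \<subseteq> {1..n}\<close> unfolding u_def w_def cube_vertices_def by auto
  then have "cube_adj n u w"
    using \<open>card (sym_diff U W) = 1\<close> hdist_eq_card_sym_diff unfolding cube_adj_def by simp
  moreover have "\<sigma> \<subseteq> nbhd n u \<union> nbhd n w"
  proof
    fix z assume "z \<in> \<sigma>"
    then have "z \<in> cube_vertices n" using assms(2) unfolding is_simplex_def by blast
    with near[of "Collect z"] \<open>z \<in> \<sigma>\<close> vertices show "z \<in> nbhd n u \<union> nbhd n w"
      unfolding nbhd_def cube_adj_def by (auto simp: hdist_eq_card_sym_diff sym_diff_commute)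
  qed
  ultimately show ?thesis by (rule that)
qed

theorem mainTheorem11:
  fixes n :: nat and \<sigma> :: "(nat \<Rightarrow> bool) set"
  assumes "n \<ge> 5"
    and "maximal_simplex n \<sigma>"
    and "covers_all_places n \<sigma>"
    and "\<forall>w\<in>\<sigma>. card (nbhd n w \<inter> \<sigma>) \<ge> 2"
  shows "\<exists>v\<in>\<sigma>. \<exists>w\<in>\<sigma>. cube_adj n v w \<and> \<sigma> = nbhd n v \<union> nbhd n w"
proof -
  have simplex: "is_simplex n \<sigma>" and maximal: "\<And>\<tau>. is_simplex n \<tau> \<Longrightarrow> \<sigma> \<subseteq> \<tau> \<Longrightarrow> \<tau> = \<sigma>"
    using assms(2) unfolding maximal_simplex_def by auto
  obtain u w where adjacent: "cube_adj n u w" and "\<sigma> \<subseteq> nbhd n u \<union> nbhd n w"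
    using simplex_in_adjacent_neighbourhoods[OF _ simplex assms(3,4)] assms(1) by auto
  then have "\<sigma> = nbhd n u \<union> nbhd n w"
    using maximal is_simplex_nbhd_Un[OF adjacent] by blast
  moreover have "u \<in> nbhd n w" "w \<in> nbhd n u"
    using adjacent hdist_commute unfolding nbhd_def cube_adj_def by auto
  ultimately show ?thesis using adjacent by blast
qed

end
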